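(* Let $(X,\mathcal T,P,\leq,\{\sigma_x:x\in X\})$ be a typed topological space with $X$ finite, let $p\in P$, and assume $\sigma$ has least $p$-neighborhood. Let $y\neq z\in X$ satisfy $z\notin p\vdash tr(\{y\})$ and $y\notin p\vdash tr(\{z\})$, and let $S$ be the $p$-surgery on $(z,y)$. Then (1) $p\vdash_S tr(\{y\})=p\vdash tr(\{y\})$; (2) $p\vdash_S tr(\{z\})\cap p\vdash_S tr(\{y\})=\emptyset$; and (3) $p\vdash_S tr(\{y\})\cup p\vdash_S tr(\{z\})=p\vdash tr(\{y\})\cup p\vdash tr(\{z\})$.
   Context: A typed topological space $(X,\mathcal T,P,\leq,\{\sigma_x:x\in X\})$ consists of a topological space $(X,\mathcal T)$, a partially ordered set $(P,\leq)$ of types, and for each $x\in X$ a partial function $\sigma_x:\{O\in\mathcal T:x\in O\}\to P$ such that for all $U,V$ in its domain, $\sigma_x(U)\leq\sigma_x(V)$ iff $U\subseteq V$. $U$ is a type-$p$ neighborhood of $x$ if $U$ is in the domain of $\sigma_x$ and $\sigma_x(U)=p$. $\sigma$ has least $p$-neighborhood if every $x$ has a type-$p$ neighborhood $p\vdash U_{min}(x)$ contained in all its type-$p$ neighborhoods; then $x$ is a $p$-accumulation point of $A$ iff $p\vdash U_{min}(x)\cap A\neq\emptyset$. $p\vdash CL_1(A)=A\cup\{p\text{-accumulation points of }A\}$, $p\vdash CL_n(A)=p\vdash CL_1(p\vdash CL_{n-1}(A))$, $p\vdash tr(A)=\bigcup_{n\ge1}p\vdash CL_n(A)$. The $p$-surgery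 $S$ on $(z,y)$ (defined when $z\notin p\vdash tr(\{y\})$ and $y\notin p\vdash tr(\{z\})$) modifies, for each $w\in p\vdash tr(\{y\})\cap p\vdash tr(\{z\})$, the least neighborhood to $p\vdash_S U_{min}(w):=p\vdash U_{min}(w)\setminus\big(p\vdash tr(\{z\})\setminus p\vdash tr(\{y\})\big)$, leaving all other least $p$-neighborhoods unchanged. In the modified space, a point $x$ is a $p$-accumulation point of $A$ iff its (possibly modified) least $p$-neighborhood meets $A$, and $p\vdash_S CL_n$, $p\vdash_S tr$ denote the closures computed in this modified space. *)

theory Defs
  imports "HOL-Analysis.Analysis"
begin

definition typed_top_space ::
  "'a topology \<Rightarrow> 'p set \<Rightarrow> ('p \<Rightarrow> 'p \<Rightarrow> bool) \<Rightarrow> ('a \<Rightarrow> 'a set \<Rightarrow> 'p option) \<Rightarrow> bool" where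
  "typed_top_space T P le \<sigma> \<longleftrightarrow>
     (\<forall>p\<in>P. le p p) \<and>
     (\<forall>p\<in>P. \<forall>q\<in>P. le p q \<and> le q p \<longrightarrow> p = q) \<and>
     (\<forall>p\<in>P. \<forall>q\<in>P. \<forall>r\<in>P. le p q \<and> le q r \<longrightarrow> le p r) \<and>
     (\<forall>x\<in>topspace T. \<forall>U. \<sigma> x U \<noteq> None \<longrightarrow> openin T U \<and> x \<in> U \<and> the (\<sigma> x U) \<in> P) \<and>
     (\<forall>x\<in>topspace T. \<forall>U V. \<sigma> x U \<noteq> None \<longrightarrow> \<sigma> x V \<noteq> None \<longrightarrow>
         (le (the (\<sigma> x U)) (the (\<sigma> x V)) \<longleftrightarrow> U \<subseteq> V))"

text \<open>U is a type-p neighbourhood of x iff sigma x U = Some p.\<close>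

definition has_least_nbhd :: "'a topology \<Rightarrow> ('a \<Rightarrow> 'a set \<Rightarrow> 'p option) \<Rightarrow> 'p \<Rightarrow> bool" where
  "has_least_nbhd T \<sigma> p \<longleftrightarrow>
     (\<forall>x\<in>topspace T. \<exists>U. \<sigma> x U = Some p \<and> (\<forall>V. \<sigma> x V = Some p \<longrightarrow> U \<subseteq> V))"

definition Umin :: "('a \<Rightarrow> 'a set \<Rightarrow> 'p option) \<Rightarrow> 'p \<Rightarrow> 'a \<Rightarrow> 'a set" where
  "Umin \<sigma> p x = (THE U. \<sigma> x U = Some p \<and> (\<forall>V. \<sigma> x V = Some p \<longrightarrow> U \<subseteq> V))"

text \<open>Closures computed w.r.t. an assignment N of least p-neighbourhoods to points of X.\<close>

definition acc_pts :: "'a set \<Rightarrow> ('a \<Rightarrow> 'a set) \<Rightarrow> 'a set \<Rightarrow> 'a set" where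
  "acc_pts X N A = {x \<in> X. N x \<inter> A \<noteq> {}}"

definition CL1 :: "'a set \<Rightarrow> ('a \<Rightarrow> 'a set) \<Rightarrow> 'a set \<Rightarrow> 'a set" where
  "CL1 X N A = A \<union> acc_pts X N A"

definition CLn :: "'a set \<Rightarrow> ('a \<Rightarrow> 'a set) \<Rightarrow> nat \<Rightarrow> 'a set \<Rightarrow> 'a set" where
  "CLn X N n A = (CL1 X N ^^ n) A"

definition tr :: "'a set \<Rightarrow> ('a \<Rightarrow> 'a set) \<Rightarrow> 'a set \<Rightarrow> 'a set" where
  "tr X N A = (\<Union>n\<in>{1..}. CLn X N n A)"

text \<open>The p-surgery on (z,y): modified least p-neighbourhood assignment.\<close>

definition surgery_nbhd :: "'a set \<Rightarrow> ('a \<Rightarrow> 'a set) \<Rightarrow> 'a \<Rightarrow> 'a \<Rightarrow> 'a \<Rightarrow> 'a set" where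
  "surgery_nbhd X N z y w =
     (if w \<in> tr X N {y} \<inter> tr X N {z}
      then N w - (tr X N {z} - tr X N {y})
      else N w)"

end

theory Submission
  imports Defs
begin

text \<open>Write Y and Z for the traces of y and z. The surgery only deletes points of Z - Y from
least neighbourhoods. Since Y is closed under taking accumulation points, no point of Z - Y ever
witnesses membership in Y, so the trace of y is unchanged. The trace of z after surgery cannot
enter Y: a point of Y reachable from Z - Y lies in Y \<inter> Z, and exactly there the surgery cuts
Z - Y out of its neighbourhood. Points outside Y keep their neighbourhoods, so all of Z - Y is
still reached from z. The argument only uses the neighbourhood assignment and z \<notin> Y.\<close>

lemma CLn_Suc: "CLn X N (Suc n) A = CL1 X N (CLn X N n A)"
  by (simp add: CLn_def)

lemma subset_tr: "A \<subseteq> tr X N A"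
proof
  fix a assume "a \<in> A"
  then have "a \<in> CLn X N 1 A" by (simp add: CLn_def CL1_def)
  then show "a \<in> tr X N A" unfolding tr_def by force
qed

lemma tr_closed:
  assumes "x \<in> X" "w \<in> N x" "w \<in> tr X N A"
  shows "x \<in> tr X N A"
proof -
  obtain n where n: "n \<ge> 1" "w \<in> CLn X N n A"
    using assms(3) unfolding tr_def by auto
  then have "x \<in> CLn X N (Suc n) A"
    using assms(1,2) by (auto simp: CLn_Suc CL1_def acc_pts_def)
  then show ?thesis unfolding tr_def using n(1) by force
qed

lemma tr_least:
  assumes "A \<subseteq> B" "\<And>x w. x \<in> X \<Longrightarrow> w \<in> N x \<Longrightarrow> w \<in> B \<Longrightarrow> x \<in> B"
  shows "tr X N A \<subseteq> B"
proof -
  have "CLn X N n A \<subseteq> B" for n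
  proof (induction n)
    case 0
    then show ?case using assms(1) by (simp add: CLn_def)
  next
    case (Suc n)
    then show ?case using assms(2) by (auto simp: CLn_Suc CL1_def acc_pts_def)
  qed
  then show ?thesis unfolding tr_def by auto
qed

lemma tr_mono_nbhd:
  assumes "\<And>x. x \<in> X \<Longrightarrow> N' x \<subseteq> N x"
  shows "tr X N' A \<subseteq> tr X N A"
proof (rule tr_least[OF subset_tr])
  fix x w
  assume "x \<in> X" "w \<in> N' x" "w \<in> tr X N A"
  then show "x \<in> tr X N A"
    using assms tr_closed by (meson subsetD)
qed

lemma surgery_nbhd_subset: "surgery_nbhd X N z y w \<subseteq> N w"
  by (auto simp: surgery_nbhd_def)

lemma Int_tr_subset_surgery_nbhd: "N w \<inter> tr X N {y} \<subseteq> surgery_nbhd X N z y w"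
  by (auto simp: surgery_nbhd_def)

lemma surgery_nbhd_outside: "w \<notin> tr X N {y} \<Longrightarrow> surgery_nbhd X N z y w = N w"
  by (simp add: surgery_nbhd_def)

lemma surgery_nbhd_disjoint:
  assumes "w \<in> X" "w \<in> tr X N {y}"
  shows "surgery_nbhd X N z y w \<inter> (tr X N {z} - tr X N {y}) = {}"
proof (cases "w \<in> tr X N {z}")
  case True
  then have "surgery_nbhd X N z y w = N w - (tr X N {z} - tr X N {y})"
    using assms(2) by (simp add: surgery_nbhd_def)
  then show ?thesis by blast
next
  case False
  then have "N w \<inter> tr X N {z} = {}"
    using tr_closed[OF assms(1)] by blast
  then show ?thesis
    using surgery_nbhd_subset[of X N z y w] by blast
qed

lemma tr_surgery_nbhd_eq: "tr X (surgery_nbhd X N z y) {y} = tr X N {y}"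
proof
  show sub: "tr X (surgery_nbhd X N z y) {y} \<subseteq> tr X N {y}"
    by (rule tr_mono_nbhd) (rule surgery_nbhd_subset)
  show "tr X N {y} \<subseteq> tr X (surgery_nbhd X N z y) {y}"
  proof (rule tr_least[OF subset_tr])
    fix x w
    assume x: "x \<in> X" and w: "w \<in> N x" "w \<in> tr X (surgery_nbhd X N z y) {y}"
    then have "w \<in> surgery_nbhd X N z y x"
      using sub Int_tr_subset_surgery_nbhd[of N x X y z] by blast
    then show "x \<in> tr X (surgery_nbhd X N z y) {y}"
      using tr_closed[OF x] w(2) by blast
  qed
qed

lemma tr_surgery_nbhd_subset_Diff:
  assumes "z \<notin> tr X N {y}"
  shows "tr X (surgery_nbhd X N z y) {z} \<subseteq> tr X N {z} - tr X N {y}"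
proof (rule tr_least)
  show "{z} \<subseteq> tr X N {z} - tr X N {y}"
    using assms subset_tr[of "{z}" X N] by blast
next
  fix x w
  assume x: "x \<in> X" and w: "w \<in> surgery_nbhd X N z y x" "w \<in> tr X N {z} - tr X N {y}"
  have "x \<in> tr X N {z}"
    using tr_closed[OF x] surgery_nbhd_subset[of X N z y x] w by blast
  moreover have "x \<notin> tr X N {y}"
    using surgery_nbhd_disjoint[OF x] w by blast
  ultimately show "x \<in> tr X N {z} - tr X N {y}" by blast
qed

lemma tr_subset_tr_surgery_nbhd_Un:
  "tr X N {z} \<subseteq> tr X N {y} \<union> tr X (surgery_nbhd X N z y) {z}"
proof (rule tr_least)
  show "{z} \<subseteq> tr X N {y} \<union> tr X (surgery_nbhd X N z y) {z}"
    using subset_tr[of "{z}" X "surgery_nbhd X N z y"] by blast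
next
  fix x w
  assume x: "x \<in> X" and w: "w \<in> N x" "w \<in> tr X N {y} \<union> tr X (surgery_nbhd X N z y) {z}"
  show "x \<in> tr X N {y} \<union> tr X (surgery_nbhd X N z y) {z}"
  proof (cases "x \<in> tr X N {y}")
    case False
    then have "w \<in> surgery_nbhd X N z y x"
      using surgery_nbhd_outside[of x X N y z] w(1) by simp
    then show ?thesis
      using False w tr_closed[of x X w N] tr_closed[of x X w "surgery_nbhd X N z y"] x
      by blast
  qed simp
qed

theorem proposition3p13:
  fixes T :: "'a topology" and P :: "'p set" and le :: "'p \<Rightarrow> 'p \<Rightarrow> bool"
    and \<sigma> :: "'a \<Rightarrow> 'a set \<Rightarrow> 'p option" and p :: 'p and y z :: 'a
  assumes "typed_top_space T P le \<sigma>"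
    and "finite (topspace T)"
    and "p \<in> P"
    and "has_least_nbhd T \<sigma> p"
    and "y \<in> topspace T" and "z \<in> topspace T" and "y \<noteq> z"
    and "z \<notin> tr (topspace T) (Umin \<sigma> p) {y}"
    and "y \<notin> tr (topspace T) (Umin \<sigma> p) {z}"
  shows "(tr (topspace T) (surgery_nbhd (topspace T) (Umin \<sigma> p) z y) {y}
           = tr (topspace T) (Umin \<sigma> p) {y}) \<and>
    (tr (topspace T) (surgery_nbhd (topspace T) (Umin \<sigma> p) z y) {z}
           \<inter> tr (topspace T) (surgery_nbhd (topspace T) (Umin \<sigma> p) z y) {y} = {}) \<and>
    (tr (topspace T) (surgery_nbhd (topspace T) (Umin \<sigma> p) z y) {y}
           \<union> tr (topspace T) (surgery_nbhd (topspace T) (Umin \<sigma> p) z y) {z}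
         = tr (topspace T) (Umin \<sigma> p) {y} \<union> tr (topspace T) (Umin \<sigma> p) {z})"
  using tr_surgery_nbhd_eq[of "topspace T" "Umin \<sigma> p" z y]
    tr_surgery_nbhd_subset_Diff[OF assms(8)]
    tr_subset_tr_surgery_nbhd_Un[of "topspace T" "Umin \<sigma> p" z y]
  by blast

end
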